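(* For $q\in(0,1)$, $$\lim_{n\to\infty}T_{1,n,q}=\begin{cases}\dfrac{1}{2q-1}\displaystyle\int_0^1\frac{u^{-2q+1}-1}{1-u}\cdot\frac{(1-\frac u2)^{q-1}-1}{u}\,du & q\in(0,1)\setminus\{\tfrac12\},\\[8pt] \displaystyle\int_0^1\frac{-\ln u}{1-u}\cdot\frac{(1-\frac u2)^{-1/2}-1}{u}\,du & q=\tfrac12.\end{cases}$$
   Context: For $q\in(0,1)$ and $k\ge1$: $H(k,q):=\frac{k}{2q-1}\Big(\frac{\Gamma(k+2q)}{\Gamma(k+1)\Gamma(2q)}-1\Big)$ if $q\ne\frac12$, and $H(k,\tfrac12):=k\sum_{j=1}^k\frac1j$. Also $I(k,q):=\frac{\Gamma(k+1)}{\Gamma(k+q)\Gamma(1-q)}$. Define $$T_{1,n,q}:=\sum_{k=1}^n\frac{H(k,q)I(k,q)}{k^2}\int_0^1\frac{u^{k+q-1}(1-u)^{1-q}}{1+u}\,du.$$ *)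

theory Defs
  imports "HOL-Analysis.Analysis"
begin

definition H :: "nat \<Rightarrow> real \<Rightarrow> real" where
  "H k q = (if q = 1/2 then real k * (\<Sum>j=1..k. 1 / real j)
            else real k / (2*q - 1) * (Gamma (real k + 2*q) / (Gamma (real k + 1) * Gamma (2*q)) - 1))"

definition I :: "nat \<Rightarrow> real \<Rightarrow> real" where
  "I k q = Gamma (real k + 1) / (Gamma (real k + q) * Gamma (1 - q))"

definition T1 :: "nat \<Rightarrow> real \<Rightarrow> real" where
  "T1 n q = (\<Sum>k=1..n. H k q * I k q / (real k)^2 *
      (LBINT u:{0<..<1}. u powr (real k + q - 1) * (1 - u) powr (1 - q) / (1 + u)))"

definition T1_limit :: "real \<Rightarrow> real" where
  "T1_limit q = (if q = 1/2 then
      (LBINT u:{0<..<1}. (- ln u) / (1 - u) * (((1 - u/2) powr (-1/2) - 1) / u))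
    else 1 / (2*q - 1) *
      (LBINT u:{0<..<1}. (u powr (-2*q + 1) - 1) / (1 - u) * (((1 - u/2) powr (q - 1) - 1) / u)))"

end

theory Submission
  imports Defs
begin

text \<open>
  Since \<open>H(k,q) I(k,q) / k\<^sup>2 = (H(k,q)/k) (I(k,q)/k)\<close>, the key step is the identity
  \<open>I(k,q)/k \<cdot> \<integral>\<^sub>0\<^sup>1 u\<^bsup>k+q-1\<^esup> (1-u)\<^bsup>1-q\<^esup> / (1+u) du = \<integral>\<^sub>0\<^sup>1 (1-s)\<^bsup>k-1\<^esup> ((1-s/2)\<^bsup>q-1\<^esup> - 1) ds\<close>:
  expanding \<open>1/(1+u)\<close> as a geometric series in \<open>(1-u)/2\<close> on the left and
  \<open>(1-s/2)\<^bsup>q-1\<^esup>\<close> as a binomial series on the right, both sides become the same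
  series of Beta integrals. The coefficients \<open>H(k,q)/k\<close> have the generating function
  \<open>((1-x)\<^bsup>-2q\<^esup> - (1-x)\<^bsup>-1\<^esup>)/(2q-1)\<close>, which is \<open>-ln(1-x)/(1-x)\<close> for \<open>q = 1/2\<close>, so by
  monotone convergence \<open>T\<^sub>1\<^sub>,\<^sub>n\<^sub>,\<^sub>q\<close> tends to the integral of the summed integrand, which
  is the integrand of the limit. That integral is finite because the integrand is
  \<open>O(s\<^bsup>-q\<^esup>)\<close>.
\<close>

lemma nn_set_integral_sums:
  fixes f :: "nat \<Rightarrow> 'a \<Rightarrow> real"
  assumes [measurable]: "\<And>m. f m \<in> borel_measurable M" "A \<in> sets M"
    and sums: "\<And>x. x \<in> A \<Longrightarrow> (\<lambda>m. f m x) sums g x"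
    and nonneg: "\<And>m x. x \<in> A \<Longrightarrow> 0 \<le> f m x"
  shows "(\<integral>\<^sup>+x\<in>A. ennreal (g x) \<partial>M) = (\<Sum>m. \<integral>\<^sup>+x\<in>A. ennreal (f m x) \<partial>M)"
proof -
  have "(\<integral>\<^sup>+x\<in>A. ennreal (g x) \<partial>M) = (\<integral>\<^sup>+x. (\<Sum>m. ennreal (f m x) * indicator A x) \<partial>M)"
  proof (intro nn_integral_cong)
    fix x
    show "ennreal (g x) * indicator A x = (\<Sum>m. ennreal (f m x) * indicator A x)"
      using suminf_ennreal_eq[OF nonneg sums] by (cases "x \<in> A") simp_all
  qed
  also have "\<dots> = (\<Sum>m. \<integral>\<^sup>+x\<in>A. ennreal (f m x) \<partial>M)"
    by (intro nn_integral_suminf) measurable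
  finally show ?thesis .
qed

lemma finite_nn_set_integral_eq_set_integral:
  fixes f :: "'a \<Rightarrow> real"
  assumes "f \<in> borel_measurable M" "A \<in> sets M" "\<And>x. x \<in> A \<Longrightarrow> 0 \<le> f x"
    and finite: "(\<integral>\<^sup>+x\<in>A. ennreal (f x) \<partial>M) < \<infinity>"
  shows "(\<integral>\<^sup>+x\<in>A. ennreal (f x) \<partial>M) = ennreal (LINT x:A|M. f x)"
proof -
  have "(LINT x:A|M. f x) = enn2real (\<integral>\<^sup>+x. ennreal (indicator A x *\<^sub>R f x) \<partial>M)"
    unfolding set_lebesgue_integral_def using assms
    by (intro integral_eq_nn_integral) (auto simp: indicator_def)
  also have "(\<integral>\<^sup>+x. ennreal (indicator A x *\<^sub>R f x) \<partial>M) = (\<integral>\<^sup>+x\<in>A. ennreal (f x) \<partial>M)"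
    by (intro nn_integral_cong) (simp add: indicator_def)
  finally show ?thesis
    using finite by simp
qed

lemma set_lebesgue_integral_nonneg:
  fixes f :: "'a \<Rightarrow> real"
  assumes "\<And>x. x \<in> A \<Longrightarrow> 0 \<le> f x"
  shows "0 \<le> (LINT x:A|M. f x)"
  unfolding set_lebesgue_integral_def
  by (intro Bochner_Integration.integral_nonneg) (simp add: assms indicator_def)

lemma nn_set_integral_Beta:
  assumes "0 < a" "0 < b" "0 \<le> c"
    and "\<And>u. u \<in> {0<..<1} \<Longrightarrow> f u = c * (u powr (a - 1) * (1 - u) powr (b - 1))"
  shows "(\<integral>\<^sup>+u\<in>{0<..<1}. ennreal (f u) \<partial>lborel) = ennreal (c * Beta a b)"
proof -
  have "((\<lambda>u. c * (u powr (a - 1) * (1 - u) powr (b - 1))) has_integral c * Beta a b) {0<..<1}"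
    using has_integral_Beta_real[OF assms(1,2)]
    by (intro has_integral_mult_right) (simp add: has_integral_Icc_iff_Ioo)
  then have "(f has_integral c * Beta a b) {0<..<1}"
    by (subst has_integral_cong[OF assms(4)])
  then show ?thesis
    using assms by (intro nn_integral_has_integral_lebesgue') auto
qed

lemma sums_pochhammer_binomial:
  fixes x :: real
  assumes "\<bar>x\<bar> < 1"
  shows "(\<lambda>n. pochhammer a n / fact n * x ^ n) sums ((1 - x) powr (- a))"
proof -
  have "((- a) gchoose n) * (- x) ^ n = pochhammer a n / fact n * x ^ n" for n
  proof -
    have "((- a) gchoose n) * (- x) ^ n = ((-1) ^ n * (-1) ^ n) * (pochhammer a n / fact n) * x ^ n"
      by (simp add: gbinomial_pochhammer power_minus[of x])
    also have "(-1 :: real) ^ n * (-1) ^ n = 1"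
      by (simp flip: power_mult_distrib)
    finally show ?thesis by simp
  qed
  then show ?thesis
    using gen_binomial_real[of "- x" "- a"] assms by simp
qed

lemma sums_binomial_tail_half:
  fixes q s :: real
  assumes "\<bar>s\<bar> < 2"
  shows "(\<lambda>n. pochhammer (1 - q) (Suc n) / fact (Suc n) * (s/2) ^ Suc n)
           sums ((1 - s/2) powr (q - 1) - 1)"
  using sums_pochhammer_binomial[of "s/2" "1 - q"] assms
  by (subst sums_Suc_iff) simp

lemma one_minus_half_powr_bounds:
  fixes q s :: real
  assumes "q < 1" "0 \<le> s" "s \<le> 1"
  shows "0 \<le> (1 - s/2) powr (q - 1) - 1"
    and "(1 - s/2) powr (q - 1) - 1 \<le> s * ((1/2) powr (q - 1) - 1)"
proof -
  define b where "b n = pochhammer (1 - q) (Suc n) / fact (Suc n) * (1/2) ^ Suc n" for n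
  have b_nonneg: "0 \<le> b n" for n
    using assms(1) by (simp add: b_def pochhammer_nonneg)
  have at_s: "(\<lambda>n. b n * s ^ Suc n) sums ((1 - s/2) powr (q - 1) - 1)"
    using sums_binomial_tail_half[of s q] assms by (simp add: b_def power_divide)
  have at_one: "(\<lambda>n. s * b n) sums (s * ((1/2) powr (q - 1) - 1))"
    using sums_mult[OF sums_binomial_tail_half[of 1 q], of s] by (simp add: b_def mult_ac)
  show "0 \<le> (1 - s/2) powr (q - 1) - 1"
    using b_nonneg assms by (intro sums_le[OF _ sums_zero at_s]) simp
  show "(1 - s/2) powr (q - 1) - 1 \<le> s * ((1/2) powr (q - 1) - 1)"
  proof (rule sums_le[OF _ at_s at_one])
    fix n
    have "s ^ Suc n \<le> s"
      using assms by (simp add: power_le_one mult_left_le)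
    then have "b n * s ^ Suc n \<le> b n * s"
      using b_nonneg by (rule mult_left_mono)
    then show "b n * s ^ Suc n \<le> s * b n"
      by (simp only: mult.commute)
  qed
qed

lemma H_div_eq_pochhammer:
  assumes "0 < q" "q \<noteq> 1/2"
  shows "H k q / real k = (pochhammer (2*q) k / fact k - 1) / (2*q - 1)"
proof (cases "k = 0")
  case False
  have "2*q \<notin> \<int>\<^sub>\<le>\<^sub>0"
    using assms(1) by (auto elim!: nonpos_Ints_cases)
  then have "pochhammer (2*q) k / fact k = Gamma (real k + 2*q) / (Gamma (real k + 1) * Gamma (2*q))"
    by (simp add: pochhammer_Gamma Gamma_fact add.commute)
  with False assms(2) show ?thesis
    by (simp add: H_def)
qed (simp add: H_def)

lemma H_half_div_eq_harm: "H k (1/2) / real k = harm k"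
  by (cases "k = 0") (simp_all add: H_def harm_def inverse_eq_divide)

lemma H_div_nonneg:
  assumes "0 < q"
  shows "0 \<le> H k q / real k"
proof -
  have mono: "pochhammer a k \<le> pochhammer b k" if "0 < a" "a \<le> b" for a b :: real
    unfolding pochhammer_prod using that by (intro prod_mono) auto
  consider "q = 1/2" | "q < 1/2" | "q > 1/2"
    by linarith
  then show ?thesis
  proof cases
    case 1
    then show ?thesis
      by (simp only: H_half_div_eq_harm harm_nonneg)
  next
    case 2
    then have "pochhammer (2*q) k \<le> fact k"
      using assms mono[of "2*q" 1] by (simp add: pochhammer_fact)
    with 2 show ?thesis
      using assms by (simp add: H_div_eq_pochhammer divide_nonpos_neg)
  next
    case 3
    then have "fact k \<le> pochhammer (2*q) k"
      using mono[of 1 "2*q"] by (simp add: pochhammer_fact)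
    with 3 show ?thesis
      using assms by (simp add: H_div_eq_pochhammer)
  qed
qed

lemma sums_harm_power:
  fixes x :: real
  assumes "\<bar>x\<bar> < 1"
  shows "(\<lambda>n. harm n * x ^ n) sums (- ln (1 - x) / (1 - x))"
proof -
  have log: "(\<lambda>i. x ^ i / real i) sums (- ln (1 - x))"
    using sums_minus[OF ln_series'[of "- x"]] assms by simp
  have geom: "(\<lambda>j. x ^ j) sums (1 / (1 - x))"
    using geometric_sums[of x] assms by simp
  have "summable (\<lambda>i. norm (x ^ i / real i))"
    by (rule summable_comparison_test'[of "\<lambda>i. \<bar>x\<bar> ^ i" 1])
      (use assms in \<open>auto simp: power_abs divide_le_eq mult_le_cancel_left1\<close>)
  moreover have "summable (\<lambda>j. norm (x ^ j))"
    using assms by (simp add: power_abs)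
  ultimately have "(\<lambda>n. \<Sum>i\<le>n. x ^ i / real i * x ^ (n - i)) sums ((\<Sum>i. x ^ i / real i) * (\<Sum>j. x ^ j))"
    by (rule Cauchy_product_sums)
  moreover have "(\<Sum>i\<le>n. x ^ i / real i * x ^ (n - i)) = harm n * x ^ n" for n
  proof -
    have "x ^ i / real i * x ^ (n - i) = inverse (real i) * x ^ n" if "i \<le> n" for i
      using that by (simp add: divide_inverse mult_ac flip: power_add)
    then have "(\<Sum>i\<le>n. x ^ i / real i * x ^ (n - i)) = (\<Sum>i\<le>n. inverse (real i)) * x ^ n"
      by (simp add: sum_distrib_right)
    also have "(\<Sum>i\<le>n. inverse (real i)) = harm n"
      by (simp add: harm_def atMost_atLeast0 sum.atLeast_Suc_atMost)
    finally show ?thesis .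
  qed
  ultimately show ?thesis
    using log geom by (simp add: sums_iff)
qed

text \<open>Tsallis' deformed logarithm; \<open>- qlog (2*q) u\<close> is \<open>\<integral>\<^sub>u\<^sup>1 t powr (-2*q) dt\<close>.\<close>

definition qlog :: "real \<Rightarrow> real \<Rightarrow> real" where
  "qlog p x = (if p = 1 then ln x else (x powr (1 - p) - 1) / (1 - p))"

lemma qlog_one [simp]: "qlog p 1 = 0"
  by (simp add: qlog_def)

lemma has_real_derivative_qlog:
  assumes "0 < x"
  shows "(qlog p has_real_derivative x powr (- p)) (at x)"
proof (cases "p = 1")
  case True
  then show ?thesis
    using DERIV_ln[OF assms] assms by (simp add: qlog_def[abs_def] powr_minus inverse_eq_divide)
next
  case False
  have "((\<lambda>x. (x powr (1 - p) - 1) / (1 - p)) has_real_derivative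
          ((1 - p) * x powr (1 - p - 1) - 0) / (1 - p)) (at x)"
    using assms by (intro DERIV_cdivide DERIV_diff has_real_derivative_powr DERIV_const)
  with False show ?thesis
    by (simp add: qlog_def[abs_def])
qed

lemma sums_H_div_power:
  fixes x :: real
  assumes "0 < q" "\<bar>x\<bar> < 1"
  shows "(\<lambda>k. H k q / real k * x ^ k) sums (- qlog (2*q) (1 - x) / (1 - x))"
proof (cases "q = 1/2")
  case True
  then show ?thesis
    using sums_harm_power[OF assms(2)] unfolding True H_half_div_eq_harm by (simp add: qlog_def)
next
  case False
  have x: "0 < 1 - x"
    using assms(2) by simp
  have "(\<lambda>k. (pochhammer (2*q) k / fact k * x ^ k - x ^ k) / (2*q - 1))
          sums (((1 - x) powr (- (2*q)) - 1 / (1 - x)) / (2*q - 1))"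
    using sums_pochhammer_binomial[OF assms(2)] geometric_sums[of x] assms(2)
    by (intro sums_divide sums_diff) simp_all
  moreover have "((1 - x) powr (- (2*q)) - 1 / (1 - x)) / (2*q - 1) = - qlog (2*q) (1 - x) / (1 - x)"
  proof -
    define P where "P = (1 - x) powr (- (2*q))"
    have qlog_eq: "qlog (2*q) (1 - x) = ((1 - x) * P - 1) / (1 - 2*q)"
      using False powr_add[of "1 - x" 1 "- (2*q)"] x by (simp add: qlog_def P_def)
    show ?thesis
      using False x unfolding qlog_eq P_def[symmetric]
      by (simp add: divide_simps) (simp add: algebra_simps)
  qed
  ultimately show ?thesis
    using assms(1) False by (simp add: H_div_eq_pochhammer left_diff_distrib)
qed

lemma minus_qlog_le:
  assumes q: "0 < q" "q < 1" and s: "0 < s" "s \<le> 1"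
  shows "- qlog (2*q) s \<le> (1 - s) * s powr (- q) / (1 - q)"
proof -
  define g where "g x = (x powr (- q) - x powr (1 - 2*q)) / (1 - q) + qlog (2*q) x" for x
  have "g 1 \<le> g s"
  proof (rule DERIV_nonpos_imp_nonincreasing[OF s(2)])
    fix x assume x: "s \<le> x" "x \<le> 1"
    then have "0 < x"
      using s by simp
    have exponent: "1 - 2*q - 1 = - (2*q)"
      by simp
    have slope: "(- q * A - (1 - 2*q) * B) / (1 - q) + B = q / (1 - q) * (B - A)" for A B :: real
      using q by (simp add: divide_simps) (simp add: algebra_simps)
    have "(g has_real_derivative
        (- q * x powr (- q - 1) - (1 - 2*q) * x powr (1 - 2*q - 1)) / (1 - q) + x powr (- (2*q))) (at x)"
      unfolding g_def[abs_def] using \<open>0 < x\<close>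
      by (intro DERIV_add DERIV_cdivide DERIV_diff has_real_derivative_powr has_real_derivative_qlog)
    then have "(g has_real_derivative q / (1 - q) * (x powr (- (2*q)) - x powr (- q - 1))) (at x)"
      unfolding exponent slope .
    moreover have "x powr (- (2*q)) \<le> x powr (- q - 1)"
      using \<open>0 < x\<close> x q by (intro powr_mono') auto
    then have "q / (1 - q) * (x powr (- (2*q)) - x powr (- q - 1)) \<le> 0"
      using q by (intro mult_nonneg_nonpos) auto
    ultimately show "\<exists>y. (g has_real_derivative y) (at x) \<and> y \<le> 0"
      by blast
  qed
  then have "- qlog (2*q) s \<le> (s powr (- q) - s powr (1 - 2*q)) / (1 - q)"
    by (simp add: g_def)
  also have "s powr (- q) - s powr (1 - 2*q) = s powr (- q) * (1 - s powr (1 - q))"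
    by (simp add: right_diff_distrib flip: powr_add)
  also have "\<dots> \<le> s powr (- q) * (1 - s)"
    using powr_mono'[of "1 - q" 1 s] s q by (intro mult_left_mono) auto
  finally show ?thesis
    using q by (simp add: divide_right_mono mult.commute)
qed

definition T1_integrand :: "real \<Rightarrow> real \<Rightarrow> real" where
  "T1_integrand q u = - qlog (2*q) u / (1 - u) * (((1 - u/2) powr (q - 1) - 1) / u)"

lemma T1_limit_eq_set_integral: "T1_limit q = (LBINT u:{0<..<1}. T1_integrand q u)"
proof (cases "q = 1/2")
  case True
  show ?thesis
    unfolding True by (simp add: T1_limit_def T1_integrand_def qlog_def)
next
  case False
  have "2*q \<noteq> 1" "- 2*q + 1 = 1 - 2*q"
    using False by simp_all
  moreover have "1 / (2*q - 1) * (a / (1 - u) * w) = - (a / (1 - 2*q)) / (1 - u) * w" for a w u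
    using False by (simp add: divide_simps) (simp add: algebra_simps)
  ultimately have "1 / (2*q - 1) * ((u powr (-2*q + 1) - 1) / (1 - u) * (((1 - u/2) powr (q - 1) - 1) / u))
      = T1_integrand q u" for u
    by (simp only: T1_integrand_def qlog_def if_False)
  with False show ?thesis
    unfolding T1_limit_def set_integral_mult_right[symmetric] by simp
qed

lemma sums_T1_integrand:
  assumes "0 < q" "0 < s" "s < 1"
  shows "(\<lambda>k. H (Suc k) q / real (Suc k) * (1 - s) ^ k * ((1 - s/2) powr (q - 1) - 1))
           sums T1_integrand q s"
proof -
  have "(\<lambda>k. H k q / real k * (1 - s) ^ k) sums (- qlog (2*q) s / s)"
    using sums_H_div_power[of q "1 - s"] assms by simp
  then have "(\<lambda>k. H (Suc k) q / real (Suc k) * (1 - s) ^ Suc k) sums (- qlog (2*q) s / s)"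
    by (subst sums_Suc_iff) simp \<comment> \<open>the dropped term is \<open>H 0 q / 0 = 0\<close>\<close>
  then have "(\<lambda>k. H (Suc k) q / real (Suc k) * (1 - s) ^ Suc k / (1 - s) * ((1 - s/2) powr (q - 1) - 1))
      sums (- qlog (2*q) s / s / (1 - s) * ((1 - s/2) powr (q - 1) - 1))"
    by (intro sums_mult2 sums_divide)
  then show ?thesis
    using assms by (simp add: T1_integrand_def mult_ac)
qed

lemma T1_series_term_nonneg:
  assumes "0 < q" "q < 1" "0 \<le> s" "s \<le> 1"
  shows "0 \<le> H (Suc k) q / real (Suc k) * (1 - s) ^ k * ((1 - s/2) powr (q - 1) - 1)"
  using assms by (intro mult_nonneg_nonneg H_div_nonneg one_minus_half_powr_bounds(1)) auto

lemma T1_integrand_nonneg: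
  assumes "0 < q" "q < 1" "0 < s" "s < 1"
  shows "0 \<le> T1_integrand q s"
  using assms T1_series_term_nonneg
  by (intro sums_le[OF _ sums_zero sums_T1_integrand]) auto

lemma T1_integrand_le:
  assumes q: "0 < q" "q < 1" and s: "0 < s" "s < 1"
  shows "T1_integrand q s \<le> ((1/2) powr (q - 1) - 1) / (1 - q) * s powr (- q)"
proof -
  have "- qlog (2*q) s / (1 - s) \<le> (1 - s) * s powr (- q) / (1 - q) / (1 - s)"
    using minus_qlog_le[OF q s(1)] s by (intro divide_right_mono) auto
  then have "- qlog (2*q) s / (1 - s) \<le> s powr (- q) / (1 - q)"
    using s by simp
  moreover have "0 \<le> ((1 - s/2) powr (q - 1) - 1) / s"
    and "((1 - s/2) powr (q - 1) - 1) / s \<le> (1/2) powr (q - 1) - 1"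
    using one_minus_half_powr_bounds[of q s] q s by (simp_all add: divide_le_eq mult.commute)
  ultimately have "T1_integrand q s \<le> s powr (- q) / (1 - q) * ((1/2) powr (q - 1) - 1)"
    unfolding T1_integrand_def using q by (intro mult_mono) auto
  then show ?thesis
    by (simp add: mult_ac)
qed

lemma T1_integrand_measurable [measurable]: "T1_integrand q \<in> borel_measurable lborel"
  unfolding T1_integrand_def qlog_def by measurable

lemma nn_integral_T1_integrand_finite:
  assumes q: "0 < q" "q < 1"
  shows "(\<integral>\<^sup>+s\<in>{0<..<1}. ennreal (T1_integrand q s) \<partial>lborel) < \<infinity>"
proof -
  define c where "c = ((1/2) powr (q - 1) - 1) / (1 - q)"
  have "0 \<le> c"
    using one_minus_half_powr_bounds[of q 1] q by (simp add: c_def)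
  have "(\<integral>\<^sup>+s\<in>{0<..<1}. ennreal (T1_integrand q s) \<partial>lborel)
      \<le> (\<integral>\<^sup>+s\<in>{0<..<1}. ennreal (c * s powr (- q)) \<partial>lborel)"
    using T1_integrand_le[OF q]
    by (intro nn_integral_mono) (simp add: c_def indicator_def ennreal_leI)
  also have "\<dots> = ennreal (c * Beta (1 - q) 1)"
    using q \<open>0 \<le> c\<close> by (intro nn_set_integral_Beta) auto
  finally show ?thesis
    by (rule le_less_trans) simp
qed

lemma I_div_eq_Gamma:
  assumes "0 < k"
  shows "I k q / real k = Gamma (real k) / (Gamma (real k + q) * Gamma (1 - q))"
proof -
  have "Gamma (real k + 1) = real k * Gamma (real k)"
    using assms by (intro Gamma_plus1) (auto elim!: nonpos_Ints_cases)
  then show ?thesis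
    using assms by (simp add: I_def)
qed

lemma Gamma_Beta_identity:
  assumes "0 < q" "q < 1" "0 < x"
  shows "Gamma x / (Gamma (x + q) * Gamma (1 - q)) * Beta (x + q) (2 - q + real m)
       = pochhammer (1 - q) (Suc m) / fact (Suc m) * Beta (real m + 2) x"
proof -
  have "1 - q \<notin> \<int>\<^sub>\<le>\<^sub>0"
    using assms by (auto elim!: nonpos_Ints_cases)
  then have "pochhammer (1 - q) (Suc m) = Gamma (1 - q + real (Suc m)) / Gamma (1 - q)"
    by (rule pochhammer_Gamma)
  also have "1 - q + real (Suc m) = 2 - q + real m"
    by simp
  finally have "pochhammer (1 - q) (Suc m) = Gamma (2 - q + real m) / Gamma (1 - q)" .
  moreover have "fact (Suc m) = Gamma (real m + 2)"
    using Gamma_fact[of "Suc m", where 'a = real] by (simp add: add_ac)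
  moreover have "Gamma (x + q) \<noteq> 0" "Gamma (1 - q) \<noteq> 0" "Gamma (real m + 2) \<noteq> 0"
    using assms by (auto intro!: Gamma_real_pos[THEN less_imp_neq, symmetric])
  ultimately show ?thesis
    by (simp add: Beta_def add_ac)
qed

lemma nn_integral_Beta_div_one_plus:
  assumes "0 < a" "0 < b"
  shows "(\<integral>\<^sup>+u\<in>{0<..<1}. ennreal (u powr (a - 1) * (1 - u) powr (b - 1) / (1 + u)) \<partial>lborel)
       = (\<Sum>m. ennreal (Beta a (b + real m) / 2 ^ Suc m))"
proof -
  have "(\<integral>\<^sup>+u\<in>{0<..<1}. ennreal (u powr (a - 1) * (1 - u) powr (b - 1) / (1 + u)) \<partial>lborel)
      = (\<Sum>m. \<integral>\<^sup>+u\<in>{0<..<1}. ennreal (u powr (a - 1) * (1 - u) powr (b - 1) * ((1 - u) ^ m / 2 ^ Suc m)) \<partial>lborel)"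
  proof (rule nn_set_integral_sums)
    fix u :: real
    assume u: "u \<in> {0<..<1}"
    then have "(\<lambda>m. ((1 - u) / 2) ^ m / 2) sums (1 / (1 - (1 - u) / 2) / 2)"
      by (intro sums_divide geometric_sums) auto
    also have "1 / (1 - (1 - u) / 2) / 2 = 1 / (1 + u)"
      using u by (simp add: field_simps)
    finally have "(\<lambda>m. (1 - u) ^ m / 2 ^ Suc m) sums (1 / (1 + u))"
      by (simp add: power_divide mult.commute)
    from sums_mult[OF this, of "u powr (a - 1) * (1 - u) powr (b - 1)"]
    show "(\<lambda>m. u powr (a - 1) * (1 - u) powr (b - 1) * ((1 - u) ^ m / 2 ^ Suc m))
        sums (u powr (a - 1) * (1 - u) powr (b - 1) / (1 + u))"
      by simp
  qed auto
  also have "\<dots> = (\<Sum>m. ennreal (Beta a (b + real m) / 2 ^ Suc m))"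
  proof (intro suminf_cong)
    fix m
    show "(\<integral>\<^sup>+u\<in>{0<..<1}. ennreal (u powr (a - 1) * (1 - u) powr (b - 1) * ((1 - u) ^ m / 2 ^ Suc m)) \<partial>lborel)
        = ennreal (Beta a (b + real m) / 2 ^ Suc m)"
    proof (subst nn_set_integral_Beta[where c = "1 / 2 ^ Suc m"])
      fix u :: real
      assume u: "u \<in> {0<..<1}"
      then have "(1 - u) powr (b - 1) * (1 - u) ^ m = (1 - u) powr (b + real m - 1)"
        by (simp add: powr_add[symmetric] powr_realpow[symmetric] diff_add_eq)
      then show "u powr (a - 1) * (1 - u) powr (b - 1) * ((1 - u) ^ m / 2 ^ Suc m)
          = 1 / 2 ^ Suc m * (u powr (a - 1) * (1 - u) powr (b + real m - 1))"
        by (simp add: field_simps)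
    qed (use assms in auto)
  qed
  finally show ?thesis .
qed

lemma ennreal_set_integral_Beta_div_one_plus:
  assumes "1 \<le> a" "1 \<le> b"
  shows "ennreal (LBINT u:{0<..<1}. u powr (a - 1) * (1 - u) powr (b - 1) / (1 + u))
       = (\<Sum>m. ennreal (Beta a (b + real m) / 2 ^ Suc m))"
proof -
  define f where "f u = u powr (a - 1) * (1 - u) powr (b - 1) / (1 + u)" for u :: real
  have f_bounds: "0 \<le> f u" "f u \<le> 1" if "u \<in> {0<..<1}" for u
  proof -
    have "u powr (a - 1) * (1 - u) powr (b - 1) \<le> 1"
      using that assms by (intro mult_le_one powr_le1) auto
    then show "0 \<le> f u" "f u \<le> 1"
      using that by (simp_all add: f_def divide_le_eq)
  qed
  have "(\<integral>\<^sup>+u\<in>{0<..<1}. ennreal (f u) \<partial>lborel) \<le> (\<integral>\<^sup>+u\<in>{0<..<1::real}. 1 \<partial>lborel)"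
    using f_bounds by (intro nn_integral_mono) (simp add: indicator_def)
  then have "(\<integral>\<^sup>+u\<in>{0<..<1}. ennreal (f u) \<partial>lborel) < \<infinity>"
    by (simp add: le_less_trans)
  then have "ennreal (LBINT u:{0<..<1}. f u) = (\<integral>\<^sup>+u\<in>{0<..<1}. ennreal (f u) \<partial>lborel)"
    using f_bounds by (intro finite_nn_set_integral_eq_set_integral[symmetric]) (auto simp: f_def)
  also have "\<dots> = (\<Sum>m. ennreal (Beta a (b + real m) / 2 ^ Suc m))"
    unfolding f_def using assms by (intro nn_integral_Beta_div_one_plus) auto
  finally show ?thesis
    by (simp only: f_def)
qed

lemma nn_integral_binomial_tail_Beta:
  assumes "q < 1"
  shows "(\<integral>\<^sup>+s\<in>{0<..<1}. ennreal ((1 - s) ^ k * ((1 - s/2) powr (q - 1) - 1)) \<partial>lborel)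
       = (\<Sum>m. ennreal (pochhammer (1 - q) (Suc m) / fact (Suc m) * Beta (real m + 2) (real (Suc k)) / 2 ^ Suc m))"
proof -
  define b where "b m = pochhammer (1 - q) (Suc m) / fact (Suc m) / 2 ^ Suc m" for m
  have b_nonneg: "0 \<le> b m" for m
    using assms by (simp add: b_def pochhammer_nonneg)
  have "(\<integral>\<^sup>+s\<in>{0<..<1}. ennreal ((1 - s) ^ k * ((1 - s/2) powr (q - 1) - 1)) \<partial>lborel)
      = (\<Sum>m. \<integral>\<^sup>+s\<in>{0<..<1}. ennreal ((1 - s) ^ k * (b m * s ^ Suc m)) \<partial>lborel)"
  proof (rule nn_set_integral_sums)
    fix s :: real
    assume "s \<in> {0<..<1}"
    then have "(\<lambda>m. b m * s ^ Suc m) sums ((1 - s/2) powr (q - 1) - 1)"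
      using sums_binomial_tail_half[of s q] by (simp add: b_def power_divide)
    then show "(\<lambda>m. (1 - s) ^ k * (b m * s ^ Suc m)) sums ((1 - s) ^ k * ((1 - s/2) powr (q - 1) - 1))"
      by (rule sums_mult)
  qed (use b_nonneg in auto)
  also have "\<dots> = (\<Sum>m. ennreal (pochhammer (1 - q) (Suc m) / fact (Suc m) * Beta (real m + 2) (real (Suc k)) / 2 ^ Suc m))"
  proof (intro suminf_cong)
    fix m
    show "(\<integral>\<^sup>+s\<in>{0<..<1}. ennreal ((1 - s) ^ k * (b m * s ^ Suc m)) \<partial>lborel)
        = ennreal (pochhammer (1 - q) (Suc m) / fact (Suc m) * Beta (real m + 2) (real (Suc k)) / 2 ^ Suc m)"
    proof (subst nn_set_integral_Beta[where c = "b m"])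
      fix s :: real
      assume "s \<in> {0<..<1}"
      then have "s powr real (Suc m) = s ^ Suc m" "(1 - s) powr real k = (1 - s) ^ k"
        by (intro powr_realpow; simp)+
      moreover have "real m + 2 - 1 = real (Suc m)" "real (Suc k) - 1 = real k"
        by simp_all
      ultimately show "(1 - s) ^ k * (b m * s ^ Suc m) = b m * (s powr (real m + 2 - 1) * (1 - s) powr (real (Suc k) - 1))"
        by (simp only: mult_ac)
    qed (use b_nonneg in \<open>auto simp: b_def\<close>)
  qed
  finally show ?thesis .
qed

lemma I_integral_eq_binomial_tail_integral:
  assumes "0 < q" "q < 1"
  shows "ennreal (I (Suc k) q / real (Suc k) *
           (LBINT u:{0<..<1}. u powr (real (Suc k) + q - 1) * (1 - u) powr (1 - q) / (1 + u)))
       = (\<integral>\<^sup>+s\<in>{0<..<1}. ennreal ((1 - s) ^ k * ((1 - s/2) powr (q - 1) - 1)) \<partial>lborel)"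
proof -
  define c where "c = Gamma (real (Suc k)) / (Gamma (real (Suc k) + q) * Gamma (1 - q))"
  have "I (Suc k) q / real (Suc k) = c"
    unfolding c_def by (rule I_div_eq_Gamma) simp
  moreover have "0 \<le> c"
    using assms by (simp add: c_def Gamma_real_pos less_imp_le)
  moreover have "2 - q - 1 = 1 - q"
    by simp
  ultimately have "ennreal (I (Suc k) q / real (Suc k) *
        (LBINT u:{0<..<1}. u powr (real (Suc k) + q - 1) * (1 - u) powr (1 - q) / (1 + u)))
      = ennreal c * (\<Sum>m. ennreal (Beta (real (Suc k) + q) (2 - q + real m) / 2 ^ Suc m))"
    using ennreal_set_integral_Beta_div_one_plus[of "real (Suc k) + q" "2 - q"] assms
    by (simp add: ennreal_mult')
  also have "\<dots> = (\<Sum>m. ennreal (c * (Beta (real (Suc k) + q) (2 - q + real m) / 2 ^ Suc m)))"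
    by (simp only: ennreal_mult'[OF \<open>0 \<le> c\<close>] ennreal_suminf_cmult)
  also have "\<dots> = (\<Sum>m. ennreal (pochhammer (1 - q) (Suc m) / fact (Suc m) * Beta (real m + 2) (real (Suc k)) / 2 ^ Suc m))"
    using Gamma_Beta_identity[of q "real (Suc k)"] assms by (simp add: c_def)
  also have "\<dots> = (\<integral>\<^sup>+s\<in>{0<..<1}. ennreal ((1 - s) ^ k * ((1 - s/2) powr (q - 1) - 1)) \<partial>lborel)"
    using nn_integral_binomial_tail_Beta[OF assms(2)] by simp
  finally show ?thesis .
qed

definition T1_term :: "real \<Rightarrow> nat \<Rightarrow> real" where
  "T1_term q k = H k q * I k q / (real k)^2 *
      (LBINT u:{0<..<1}. u powr (real k + q - 1) * (1 - u) powr (1 - q) / (1 + u))"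

lemma T1_eq_sum_T1_term: "T1 n q = (\<Sum>k<n. T1_term q (Suc k))"
  unfolding T1_def T1_term_def One_nat_def sum.atLeast1_atMost_eq ..

lemma T1_term_eq:
  "T1_term q k = H k q / real k * (I k q / real k) *
      (LBINT u:{0<..<1}. u powr (real k + q - 1) * (1 - u) powr (1 - q) / (1 + u))"
  by (simp add: T1_term_def power2_eq_square)

lemma T1_term_nonneg:
  assumes "0 < q" "q < 1"
  shows "0 \<le> T1_term q k"
  unfolding T1_term_eq I_def using assms
  by (intro mult_nonneg_nonneg divide_nonneg_nonneg H_div_nonneg set_lebesgue_integral_nonneg)
     (auto intro!: Gamma_real_pos less_imp_le)

lemma ennreal_T1_term:
  assumes "0 < q" "q < 1"
  shows "ennreal (T1_term q (Suc k))
       = (\<integral>\<^sup>+s\<in>{0<..<1}. ennreal (H (Suc k) q / real (Suc k) * (1 - s) ^ k * ((1 - s/2) powr (q - 1) - 1)) \<partial>lborel)"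
proof -
  have H: "0 \<le> H (Suc k) q / real (Suc k)"
    using assms(1) by (rule H_div_nonneg)
  have "ennreal (T1_term q (Suc k)) = ennreal (H (Suc k) q / real (Suc k)) *
      (\<integral>\<^sup>+s\<in>{0<..<1}. ennreal ((1 - s) ^ k * ((1 - s/2) powr (q - 1) - 1)) \<partial>lborel)"
    unfolding T1_term_eq mult.assoc ennreal_mult'[OF H] I_integral_eq_binomial_tail_integral[OF assms] ..
  also have "\<dots> = (\<integral>\<^sup>+s\<in>{0<..<1}. ennreal (H (Suc k) q / real (Suc k) * (1 - s) ^ k * ((1 - s/2) powr (q - 1) - 1)) \<partial>lborel)"
    by (subst nn_integral_cmult[symmetric], measurable)
      (intro nn_integral_cong, simp only: ennreal_mult'[OF H] mult.assoc)
  finally show ?thesis .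
qed

theorem lemma3p8:
  fixes q :: real
  assumes "0 < q" and "q < 1"
  shows "(\<lambda>n. T1 n q) \<longlonglongrightarrow> T1_limit q"
proof -
  have "(\<Sum>k. ennreal (T1_term q (Suc k))) = (\<integral>\<^sup>+s\<in>{0<..<1}. ennreal (T1_integrand q s) \<partial>lborel)"
    unfolding ennreal_T1_term[OF assms]
    using assms sums_T1_integrand T1_series_term_nonneg
    by (intro nn_set_integral_sums[symmetric]) auto
  also have "\<dots> = ennreal (LBINT s:{0<..<1}. T1_integrand q s)"
    using assms T1_integrand_nonneg nn_integral_T1_integrand_finite
    by (intro finite_nn_set_integral_eq_set_integral) auto
  finally have "(\<lambda>k. ennreal (T1_term q (Suc k))) sums ennreal (LBINT s:{0<..<1}. T1_integrand q s)"
    by (metis summableI summable_sums)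
  then have "(\<lambda>k. T1_term q (Suc k)) sums (LBINT s:{0<..<1}. T1_integrand q s)"
    using assms T1_term_nonneg T1_integrand_nonneg
    by (subst (asm) sums_ennreal) (auto intro: set_lebesgue_integral_nonneg)
  then show ?thesis
    unfolding sums_def T1_eq_sum_T1_term T1_limit_eq_set_integral .
qed

end
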